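(* Let $P$ be a program and let $\sigma$ be a sequence of events such that the Power automaton of $P$ reaches, from its initial state $q_0$ by reading $\sigma$, a final state $q$. Then $q$ is uniquely determined by $\sigma$.
   Context: Programs. Fix a finite set $D$ of values, which also serve as addresses, with $0\in D$, and a finite set $\mathit{Reg}$ of registers taking values in $D$. Expressions are built from constants in $D$, registers, and functions over $D\cup\{\bot\}$ that return $\bot$ iff some argument is $\bot$. Commands are loads $r\leftarrow \mathrm{mem}[e]$, stores $\mathrm{mem}[e]\leftarrow e'$, assignments $r\leftarrow e$, and $\mathrm{assume}(e)$. A thread is a finite automaton whose transitions (instructions) are labeled by commands; a program is a finite sequence of threads with ids $1,\dots,|P|$. Power automaton. A state consists of, for each thread $t$, a runtime state $(F,C,L)$ ($F$ the sequence of fetched instructions, $C$ the set of committed indices, $L$ mapping each index to $\bot$ or to the store read by the load there: an initial store $\mathrm{init}_a$ of value $0$ to $a$, or a pair $(t',i')$), and a storage state $(co,prop)$ ($co$ assigns rational coherence keys to committed stores, initial stores have key $0$; $prop(t,a)$ is the last store to $a$ propagated to $t$, initially $\mathrm{init}_a$); the initial state has nothing fetched. Register values for the $i$-th instruction of thread $t$ come from the latest earlier fetched assignment or load to the register ($0$ if none; a load gives $\bot$ if unsatisfied, $0$ if it read an initial store, else the value of the store read). Address/data dependencies are earlier instructions an address/value depends on via registers; control dependencies are earlier assumes. Transitions: (fetch) append an instruction of $T_t$ continuing from the last fetched one's target state, event $(\mathrm{fetch},t,\text{instr})$; (load from memory) load $i$ with $L[i]=\bot$ and address $a\ne\bot$: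 $L[i]:=prop(t,a)$, event $(\mathrm{load},t,i,a)$; (early read) same event, if the greatest $i'<i$ that is a store with address in $\{a,\bot\}$ has address $a$, known value and is uncommitted: $L[i]:=(t,i')$; (commit) uncommitted $i$ with committed address/data/control dependencies, address and value $\ne\bot$, all earlier instructions with the same or unknown address committed, $L[i]\ne\bot$ for loads, value $\ne0$ for assumes: event $(\mathrm{commit},t,i)$; for a store additionally a fresh key $k$ is set as $co(t,i)$, event $(\mathrm{commit},t,i,k,a)$, immediately followed by propagation to $t$; (propagate) committed store $(t',i')$ to $a$ with $co(prop(t,a))<co(t',i')$: $prop(t,a):=(t',i')$, event $(\mathrm{prop},t,t',i',a)$. Final states: all fetched instructions committed; for loads $i'<i$ of a thread to the same address, $co(L[i'])\le co(L[i])$; for a store $i'$ and later load $i$ of a thread to the same address, $co(t,i')\le co(L[i])$. *)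

theory Defs
  imports Complex_Main
begin

text \<open>Values/addresses: a finite type 'v with 0 (so D = UNIV).
  None plays the role of bottom.\<close>

datatype ('v,'r) expr = Const 'v | Reg 'r | App "'v list \<Rightarrow> 'v" "('v,'r) expr list"

fun eval :: "('r \<Rightarrow> 'v option) \<Rightarrow> ('v,'r) expr \<Rightarrow> 'v option" where
  "eval \<rho> (Const c) = Some c"
| "eval \<rho> (Reg r) = \<rho> r"
| "eval \<rho> (App f es) =
     (if (\<exists>e\<in>set es. eval \<rho> e = None) then None
      else Some (f (map (\<lambda>e. the (eval \<rho> e)) es)))"

fun regs :: "('v,'r) expr \<Rightarrow> 'r set" where
  "regs (Const c) = {}"
| "regs (Reg r) = {r}"
| "regs (App f es) = (\<Union>e\<in>set es. regs e)"

datatype ('v,'r) cmd =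
    Load 'r "('v,'r) expr"
  | Store "('v,'r) expr" "('v,'r) expr"
  | Assign 'r "('v,'r) expr"
  | Assume "('v,'r) expr"

text \<open>An instruction is a transition (source state, command, target state) of a thread automaton.\<close>
type_synonym ('q,'v,'r) instr = "'q \<times> ('v,'r) cmd \<times> 'q"

record ('q,'v,'r) thread =
  tinit :: 'q
  ttrans :: "('q,'v,'r) instr set"

text \<open>A program is a list of threads; thread ids are 1, ..., length P.\<close>
type_synonym ('q,'v,'r) program = "('q,'v,'r) thread list"

definition tid :: "('q,'v,'r) program \<Rightarrow> nat \<Rightarrow> bool" where
  "tid P t \<longleftrightarrow> 1 \<le> t \<and> t \<le> length P"

definition thr :: "('q,'v,'r) program \<Rightarrow> nat \<Rightarrow> ('q,'v,'r) thread" where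
  "thr P t = P ! (t - 1)"

text \<open>Stores: initial store of an address, or the store at index i of thread t.\<close>
datatype 'v store = Init 'v | St nat nat

text \<open>Runtime state (F, C, L); indices of fetched instructions are 0-based positions in F.\<close>
record ('q,'v,'r) rstate =
  fetched :: "('q,'v,'r) instr list"
  committed :: "nat set"
  lrd :: "nat \<Rightarrow> 'v store option"

text \<open>Power state: runtime state per thread, global storage state (co, prop).
  co is defined exactly on committed stores (t,i).\<close>
record ('q,'v,'r) pstate =
  rt :: "nat \<Rightarrow> ('q,'v,'r) rstate"
  co :: "nat \<times> nat \<Rightarrow> rat option"
  prp :: "nat \<Rightarrow> 'v \<Rightarrow> 'v store"

datatype ('q,'v,'r) event =
    EvFetch nat "('q,'v,'r) instr"
  | EvLoad nat nat 'v
  | EvCommit nat nat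
  | EvCommitSt nat nat rat 'v
  | EvProp nat nat nat 'v

definition init_state :: "('q,'v::zero,'r) pstate" where
  "init_state = \<lparr> rt = (\<lambda>t. \<lparr> fetched = [], committed = {}, lrd = (\<lambda>i. None) \<rparr>),
                  co = (\<lambda>x. None), prp = (\<lambda>t a. Init a) \<rparr>"

definition nf :: "('q,'v,'r) pstate \<Rightarrow> nat \<Rightarrow> nat" where
  "nf S t = length (fetched (rt S t))"

definition cmdAt :: "('q,'v,'r) pstate \<Rightarrow> nat \<Rightarrow> nat \<Rightarrow> ('v,'r) cmd" where
  "cmdAt S t i = fst (snd (fetched (rt S t) ! i))"

fun defreg :: "('v,'r) cmd \<Rightarrow> 'r option" where
  "defreg (Load r e) = Some r"
| "defreg (Assign r e) = Some r"
| "defreg _ = None"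

fun is_load :: "('v,'r) cmd \<Rightarrow> bool" where
  "is_load (Load r e) = True" | "is_load _ = False"
fun is_store :: "('v,'r) cmd \<Rightarrow> bool" where
  "is_store (Store e d) = True" | "is_store _ = False"
fun is_assume :: "('v,'r) cmd \<Rightarrow> bool" where
  "is_assume (Assume e) = True" | "is_assume _ = False"

definition is_mem :: "('v,'r) cmd \<Rightarrow> bool" where
  "is_mem c \<longleftrightarrow> is_load c \<or> is_store c"

fun addrExp :: "('v,'r) cmd \<Rightarrow> ('v,'r) expr option" where
  "addrExp (Load r e) = Some e"
| "addrExp (Store e d) = Some e"
| "addrExp _ = None"

fun valExp :: "('v,'r) cmd \<Rightarrow> ('v,'r) expr option" where
  "valExp (Store e d) = Some d"
| "valExp (Assign r e) = Some e"
| "valExp (Assume e) = Some e"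
| "valExp (Load r e) = None"

definition has_def :: "('q,'v,'r) pstate \<Rightarrow> nat \<Rightarrow> nat \<Rightarrow> 'r \<Rightarrow> bool" where
  "has_def S t i r \<longleftrightarrow> (\<exists>j<i. defreg (cmdAt S t j) = Some r)"

definition lastdef :: "('q,'v,'r) pstate \<Rightarrow> nat \<Rightarrow> nat \<Rightarrow> 'r \<Rightarrow> nat" where
  "lastdef S t i r = (GREATEST j. j < i \<and> defreg (cmdAt S t j) = Some r)"

inductive regv :: "('q,'v::zero,'r) pstate \<Rightarrow> nat \<Rightarrow> nat \<Rightarrow> 'r \<Rightarrow> 'v option \<Rightarrow> bool"
  for S where
  rv_none: "\<not> has_def S t i r \<Longrightarrow> regv S t i r (Some 0)"
| rv_assign: "\<lbrakk> has_def S t i r; lastdef S t i r = j; cmdAt S t j = Assign r e;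
      \<forall>r'\<in>regs e. regv S t j r' (\<rho> r') \<rbrakk> \<Longrightarrow> regv S t i r (eval \<rho> e)"
| rv_load_unsat: "\<lbrakk> has_def S t i r; lastdef S t i r = j; cmdAt S t j = Load r e;
      lrd (rt S t) j = None \<rbrakk> \<Longrightarrow> regv S t i r None"
| rv_load_init: "\<lbrakk> has_def S t i r; lastdef S t i r = j; cmdAt S t j = Load r e;
      lrd (rt S t) j = Some (Init a) \<rbrakk> \<Longrightarrow> regv S t i r (Some 0)"
| rv_load_st: "\<lbrakk> has_def S t i r; lastdef S t i r = j; cmdAt S t j = Load r e;
      lrd (rt S t) j = Some (St t' i'); i' < nf S t'; cmdAt S t' i' = Store ea ed;
      \<forall>r'\<in>regs ed. regv S t' i' r' (\<rho> r') \<rbrakk> \<Longrightarrow> regv S t i r (eval \<rho> ed)"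

definition rval :: "('q,'v::zero,'r) pstate \<Rightarrow> nat \<Rightarrow> nat \<Rightarrow> 'r \<Rightarrow> 'v option" where
  "rval S t i r = (if \<exists>v. regv S t i r v then THE v. regv S t i r v else None)"

definition addrOf :: "('q,'v::zero,'r) pstate \<Rightarrow> nat \<Rightarrow> nat \<Rightarrow> 'v option" where
  "addrOf S t i = (case addrExp (cmdAt S t i) of Some e \<Rightarrow> eval (rval S t i) e | None \<Rightarrow> None)"

definition valOf :: "('q,'v::zero,'r) pstate \<Rightarrow> nat \<Rightarrow> nat \<Rightarrow> 'v option" where
  "valOf S t i = (case valExp (cmdAt S t i) of Some e \<Rightarrow> eval (rval S t i) e | None \<Rightarrow> None)"

definition addr_deps :: "('q,'v,'r) pstate \<Rightarrow> nat \<Rightarrow> nat \<Rightarrow> nat set" where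
  "addr_deps S t i = {lastdef S t i r | r e. addrExp (cmdAt S t i) = Some e \<and> r \<in> regs e \<and> has_def S t i r}"

definition data_deps :: "('q,'v,'r) pstate \<Rightarrow> nat \<Rightarrow> nat \<Rightarrow> nat set" where
  "data_deps S t i = {lastdef S t i r | r e. valExp (cmdAt S t i) = Some e \<and> r \<in> regs e \<and> has_def S t i r}"

definition ctrl_deps :: "('q,'v,'r) pstate \<Rightarrow> nat \<Rightarrow> nat \<Rightarrow> nat set" where
  "ctrl_deps S t i = {j. j < i \<and> is_assume (cmdAt S t j)}"

fun key :: "('q,'v,'r) pstate \<Rightarrow> 'v store \<Rightarrow> rat option" where
  "key S (Init a) = Some 0"
| "key S (St t i) = co S (t, i)"

definition kv :: "('q,'v,'r) pstate \<Rightarrow> 'v store \<Rightarrow> rat" where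
  "kv S s = (case key S s of Some k \<Rightarrow> k | None \<Rightarrow> 0)"

definition can_commit :: "('q,'v::zero,'r) pstate \<Rightarrow> nat \<Rightarrow> nat \<Rightarrow> bool" where
  "can_commit S t i \<longleftrightarrow>
     i < nf S t \<and> i \<notin> committed (rt S t) \<and>
     addr_deps S t i \<union> data_deps S t i \<union> ctrl_deps S t i \<subseteq> committed (rt S t) \<and>
     (addrExp (cmdAt S t i) \<noteq> None \<longrightarrow> addrOf S t i \<noteq> None) \<and>
     (valExp (cmdAt S t i) \<noteq> None \<longrightarrow> valOf S t i \<noteq> None) \<and>
     (is_mem (cmdAt S t i) \<longrightarrow>
        (\<forall>j<i. is_mem (cmdAt S t j) \<and> (addrOf S t j = None \<or> addrOf S t j = addrOf S t i)
               \<longrightarrow> j \<in> committed (rt S t))) \<and>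
     (is_load (cmdAt S t i) \<longrightarrow> lrd (rt S t) i \<noteq> None) \<and>
     (is_assume (cmdAt S t i) \<longrightarrow> valOf S t i \<noteq> Some 0)"

definition setL :: "('q,'v,'r) pstate \<Rightarrow> nat \<Rightarrow> nat \<Rightarrow> 'v store \<Rightarrow> ('q,'v,'r) pstate" where
  "setL S t i s = S\<lparr> rt := (rt S)(t := (rt S t)\<lparr> lrd := (lrd (rt S t))(i := Some s) \<rparr>) \<rparr>"

definition setC :: "('q,'v,'r) pstate \<Rightarrow> nat \<Rightarrow> nat \<Rightarrow> ('q,'v,'r) pstate" where
  "setC S t i = S\<lparr> rt := (rt S)(t := (rt S t)\<lparr> committed := insert i (committed (rt S t)) \<rparr>) \<rparr>"

definition setProp :: "('q,'v,'r) pstate \<Rightarrow> nat \<Rightarrow> 'v \<Rightarrow> 'v store \<Rightarrow> ('q,'v,'r) pstate" where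
  "setProp S t a s = S\<lparr> prp := (prp S)(t := (prp S t)(a := s)) \<rparr>"

inductive pstep :: "('q,'v::zero,'r) program \<Rightarrow> ('q,'v,'r) pstate \<Rightarrow> ('q,'v,'r) event list
                      \<Rightarrow> ('q,'v,'r) pstate \<Rightarrow> bool" for P where
  fetch: "\<lbrakk> tid P t; ins \<in> ttrans (thr P t);
      fst ins = (if fetched (rt S t) = [] then tinit (thr P t)
                 else snd (snd (last (fetched (rt S t))))) \<rbrakk>
    \<Longrightarrow> pstep P S [EvFetch t ins]
          (S\<lparr> rt := (rt S)(t := (rt S t)\<lparr> fetched := fetched (rt S t) @ [ins] \<rparr>) \<rparr>)"
| load_mem: "\<lbrakk> tid P t; i < nf S t; is_load (cmdAt S t i); lrd (rt S t) i = None;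
      addrOf S t i = Some a \<rbrakk>
    \<Longrightarrow> pstep P S [EvLoad t i a] (setL S t i (prp S t a))"
| early_read: "\<lbrakk> tid P t; i < nf S t; is_load (cmdAt S t i); lrd (rt S t) i = None;
      addrOf S t i = Some a;
      \<exists>j<i. is_store (cmdAt S t j) \<and> addrOf S t j \<in> {Some a, None};
      i' = (GREATEST j. j < i \<and> is_store (cmdAt S t j) \<and> addrOf S t j \<in> {Some a, None});
      addrOf S t i' = Some a; valOf S t i' \<noteq> None; i' \<notin> committed (rt S t) \<rbrakk>
    \<Longrightarrow> pstep P S [EvLoad t i a] (setL S t i (St t i'))"
| commit: "\<lbrakk> tid P t; can_commit S t i; \<not> is_store (cmdAt S t i) \<rbrakk>
    \<Longrightarrow> pstep P S [EvCommit t i] (setC S t i)"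
| commit_store: "\<lbrakk> tid P t; can_commit S t i; is_store (cmdAt S t i); addrOf S t i = Some a;
      k \<notin> ran (co S); k \<noteq> 0; kv S (prp S t a) < k \<rbrakk>
    \<Longrightarrow> pstep P S [EvCommitSt t i k a, EvProp t t i a]
          (setProp ((setC S t i)\<lparr> co := (co S)((t, i) := Some k) \<rparr>) t a (St t i))"
| propagate: "\<lbrakk> tid P t; tid P t'; i' \<in> committed (rt S t'); i' < nf S t';
      is_store (cmdAt S t' i'); addrOf S t' i' = Some a; co S (t', i') = Some k;
      kv S (prp S t a) < k \<rbrakk>
    \<Longrightarrow> pstep P S [EvProp t t' i' a] (setProp S t a (St t' i'))"

inductive reach :: "('q,'v::zero,'r) program \<Rightarrow> ('q,'v,'r) pstate \<Rightarrow> ('q,'v,'r) event list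
                      \<Rightarrow> ('q,'v,'r) pstate \<Rightarrow> bool" for P where
  reach_refl: "reach P S [] S"
| reach_step: "\<lbrakk> pstep P S e S'; reach P S' \<sigma> S'' \<rbrakk> \<Longrightarrow> reach P S (e @ \<sigma>) S''"

definition final :: "('q,'v::zero,'r) program \<Rightarrow> ('q,'v,'r) pstate \<Rightarrow> bool" where
  "final P S \<longleftrightarrow> (\<forall>t. tid P t \<longrightarrow>
     (\<forall>i<nf S t. i \<in> committed (rt S t)) \<and>
     (\<forall>i' i. i' < i \<and> i < nf S t \<and> is_load (cmdAt S t i') \<and> is_load (cmdAt S t i) \<and>
        addrOf S t i' = addrOf S t i
        \<longrightarrow> kv S (the (lrd (rt S t) i')) \<le> kv S (the (lrd (rt S t) i))) \<and>
     (\<forall>i' i. i' < i \<and> i < nf S t \<and> is_store (cmdAt S t i') \<and> is_load (cmdAt S t i) \<and>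
        addrOf S t i' = addrOf S t i
        \<longrightarrow> kv S (St t i') \<le> kv S (the (lrd (rt S t) i))))"

end

theory Submission
  imports Defs
begin

text \<open>Given the event, every transition is determined except a load, which may be satisfied
  from memory (the store propagated to the thread) or by an early read from the latest earlier
  store i' of the thread to the same address. If the early read is enabled, i' is still
  uncommitted; when it commits it receives a key above the key then propagated to the thread
  for that address, and propagated keys only grow. So reading from memory yields a store with
  key below co(t,i'), violating the final condition co(t,i') \<le> co(L[i]). As the event list
  of a step is determined by its first event, \<sigma> splits into steps uniquely, and two runs on
  \<sigma> ending in final states coincide step by step.\<close>

lemma eval_cong: "(\<forall>r\<in>regs e. \<rho> r = \<rho>' r) \<Longrightarrow> eval \<rho> e = eval \<rho>' e"
proof (induction e)
  case (App f es)
  then have "\<forall>x\<in>set es. eval \<rho> x = eval \<rho>' x" by auto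
  then show ?case by (auto cong: map_cong)
qed auto

lemma eval_defined_regs: "eval \<rho> e \<noteq> None \<Longrightarrow> r \<in> regs e \<Longrightarrow> \<rho> r \<noteq> None"
  by (induction e) (auto split: if_splits)

lemma regv_functional: "regv S t i r v \<Longrightarrow> regv S t i r w \<Longrightarrow> v = w"
proof (induction arbitrary: w rule: regv.induct)
  case (rv_none t i r)
  from rv_none.prems show ?case by cases (use rv_none.hyps in auto)
next
  case (rv_assign t i r j e \<rho>)
  from rv_assign.prems show ?case
  proof cases
    case (rv_assign j' e' \<rho>')
    then have "\<forall>r'\<in>regs e. \<rho> r' = \<rho>' r'" using rv_assign.IH rv_assign.hyps by auto
    then show ?thesis using rv_assign.hyps local.rv_assign by (auto intro: eval_cong)
  qed (use rv_assign.hyps in auto)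
next
  case (rv_load_unsat t i r j e)
  from rv_load_unsat.prems show ?case by cases (use rv_load_unsat.hyps in auto)
next
  case (rv_load_init t i r j e a)
  from rv_load_init.prems show ?case by cases (use rv_load_init.hyps in auto)
next
  case (rv_load_st t i r j e t' i' ea ed \<rho>)
  from rv_load_st.prems show ?case
  proof cases
    case (rv_load_st j2 e2 t2 i2 ea2 ed2 \<rho>')
    then have "\<forall>r'\<in>regs ed. \<rho> r' = \<rho>' r'" using rv_load_st.IH rv_load_st.hyps by auto
    then show ?thesis using rv_load_st.hyps local.rv_load_st by (auto intro: eval_cong)
  qed (use rv_load_st.hyps in auto)
qed

lemma rval_eqI:
  assumes "regv S t i r v" shows "rval S t i r = v"
  using the_equality[where P = "regv S t i r", OF assms regv_functional[OF _ assms]] assms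
  unfolding rval_def by auto

lemma regv_rval: "rval S t i r = Some v \<Longrightarrow> regv S t i r (Some v)"
  using rval_eqI by (fastforce simp: rval_def split: if_splits)

lemma lastdef_less: "has_def S t i r \<Longrightarrow> lastdef S t i r < i"
  unfolding has_def_def lastdef_def by (metis (mono_tags, lifting) GreatestI_nat less_imp_le)

subsection \<open>Growth of states along runs\<close>

definition state_extends :: "('q,'v,'r) pstate \<Rightarrow> ('q,'v,'r) pstate \<Rightarrow> bool" where
  "state_extends S S' \<longleftrightarrow>
     (\<forall>t. \<exists>xs. fetched (rt S' t) = fetched (rt S t) @ xs) \<and>
     (\<forall>t j s. lrd (rt S t) j = Some s \<longrightarrow> lrd (rt S' t) j = Some s) \<and>
     (\<forall>t. committed (rt S t) \<subseteq> committed (rt S' t)) \<and> co S \<subseteq>\<^sub>m co S'"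

lemma state_extends_refl: "state_extends S S"
  by (auto simp: state_extends_def)

lemma state_extends_trans:
  assumes "state_extends S1 S2" and "state_extends S2 S3"
  shows "state_extends S1 S3"
proof -
  have "\<exists>xs. fetched (rt S3 t) = fetched (rt S1 t) @ xs" for t
  proof -
    obtain xs ys where "fetched (rt S2 t) = fetched (rt S1 t) @ xs"
      and "fetched (rt S3 t) = fetched (rt S2 t) @ ys"
      using assms unfolding state_extends_def by blast
    then show ?thesis by simp
  qed
  moreover have "co S1 \<subseteq>\<^sub>m co S3"
    using assms map_le_trans unfolding state_extends_def by blast
  ultimately show ?thesis
    using assms unfolding state_extends_def by blast
qed

lemma state_extends_fetched:
  "state_extends S S' \<Longrightarrow> \<exists>xs. fetched (rt S' t) = fetched (rt S t) @ xs"
  unfolding state_extends_def by blast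

lemma state_extends_nf: "state_extends S S' \<Longrightarrow> nf S t \<le> nf S' t"
  using state_extends_fetched[of S S' t] unfolding nf_def by auto

lemma state_extends_cmdAt: "state_extends S S' \<Longrightarrow> j < nf S t \<Longrightarrow> cmdAt S' t j = cmdAt S t j"
  using state_extends_fetched[of S S' t] unfolding nf_def cmdAt_def by (auto simp: nth_append)

lemma state_extends_has_def_lastdef:
  assumes "state_extends S S'" and "i \<le> nf S t"
  shows "has_def S' t i r = has_def S t i r" and "lastdef S' t i r = lastdef S t i r"
proof -
  have "\<forall>j<i. cmdAt S' t j = cmdAt S t j"
    using assms state_extends_cmdAt by fastforce
  then show "has_def S' t i r = has_def S t i r" "lastdef S' t i r = lastdef S t i r"
    unfolding has_def_def lastdef_def by (auto intro!: arg_cong[where f = Greatest])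
qed

lemma state_extends_lrd: "state_extends S S' \<Longrightarrow> lrd (rt S t) j = Some s \<Longrightarrow> lrd (rt S' t) j = Some s"
  unfolding state_extends_def by blast

text \<open>A defined register value only depends on earlier, already fetched instructions and on
  satisfied loads, which later states keep.\<close>
lemma regv_extends:
  "regv S t i r w \<Longrightarrow> state_extends S S' \<Longrightarrow> w \<noteq> None \<Longrightarrow> i \<le> nf S t \<Longrightarrow> regv S' t i r w"
proof (induction rule: regv.induct)
  case (rv_none t i r)
  then have "\<not> has_def S' t i r" using state_extends_has_def_lastdef(1)[of S S' i t r] by simp
  then show ?case by (rule regv.rv_none)
next
  case (rv_assign t i r j e \<rho>)
  note def = state_extends_has_def_lastdef[OF rv_assign.prems(1,3), of r]
  have j: "j < i" using lastdef_less[of S t i r] rv_assign.hyps by simp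
  have "\<forall>r'\<in>regs e. regv S' t j r' (\<rho> r')"
    using rv_assign.IH rv_assign.prems j eval_defined_regs by fastforce
  moreover have "cmdAt S' t j = Assign r e"
    using state_extends_cmdAt[OF rv_assign.prems(1), of j t] rv_assign j by simp
  ultimately show ?case
    using rv_assign.hyps def by (intro regv.rv_assign) simp_all
next
  case (rv_load_unsat t i r j e)
  then show ?case by simp
next
  case (rv_load_init t i r j e a)
  note def = state_extends_has_def_lastdef[OF rv_load_init.prems(1,3), of r]
  have j: "j < i" using lastdef_less[of S t i r] rv_load_init.hyps by simp
  have "cmdAt S' t j = Load r e"
    using state_extends_cmdAt[OF rv_load_init.prems(1), of j t] rv_load_init j by simp
  moreover have "lrd (rt S' t) j = Some (Init a)"
    using state_extends_lrd rv_load_init by blast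
  ultimately show ?case
    using rv_load_init.hyps def by (intro regv.rv_load_init) simp_all
next
  case (rv_load_st t i r j e t' i' ea ed \<rho>)
  note def = state_extends_has_def_lastdef[OF rv_load_st.prems(1,3), of r]
  have j: "j < i" using lastdef_less[of S t i r] rv_load_st.hyps by simp
  have "\<forall>r'\<in>regs ed. regv S' t' i' r' (\<rho> r')"
    using rv_load_st.IH rv_load_st.prems rv_load_st.hyps eval_defined_regs by fastforce
  moreover have "cmdAt S' t j = Load r e"
    using state_extends_cmdAt[OF rv_load_st.prems(1), of j t] rv_load_st j by simp
  moreover have "cmdAt S' t' i' = Store ea ed"
    using state_extends_cmdAt[OF rv_load_st.prems(1), of i' t'] rv_load_st by simp
  moreover have "i' < nf S' t'"
    using state_extends_nf[OF rv_load_st.prems(1), of t'] rv_load_st by simp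
  moreover have "lrd (rt S' t) j = Some (St t' i')"
    using state_extends_lrd rv_load_st by blast
  ultimately show ?case
    using rv_load_st.hyps def by (intro regv.rv_load_st) simp_all
qed

lemma rval_extends:
  assumes "rval S t i r = Some v" and "state_extends S S'" and "i \<le> nf S t"
  shows "rval S' t i r = Some v"
  using regv_extends[OF regv_rval[OF assms(1)] assms(2) _ assms(3)] by (simp add: rval_eqI)

lemma addrOf_extends:
  assumes "addrOf S t i = Some a" and ext: "state_extends S S'" and i: "i < nf S t"
  shows "addrOf S' t i = Some a"
proof -
  obtain e where e: "addrExp (cmdAt S t i) = Some e" "eval (rval S t i) e = Some a"
    using assms(1) unfolding addrOf_def by (auto split: option.splits)
  have "rval S' t i r = rval S t i r" if r: "r \<in> regs e" for r
  proof -
    obtain v where "rval S t i r = Some v" using eval_defined_regs[OF _ r] e(2) by fastforce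
    then show ?thesis using rval_extends ext i by fastforce
  qed
  then have "eval (rval S' t i) e = Some a" using e(2) eval_cong by (metis (no_types, lifting))
  then show ?thesis using e(1) state_extends_cmdAt[OF ext i] unfolding addrOf_def by simp
qed

subsection \<open>Coherence keys\<close>

definition wf_storage :: "('q,'v,'r) pstate \<Rightarrow> bool" where
  "wf_storage S \<longleftrightarrow> (\<forall>t a. key S (prp S t a) \<noteq> None) \<and>
     (\<forall>t i. co S (t,i) \<noteq> None \<longrightarrow> i \<in> committed (rt S t))"

lemma wf_storage_init: "wf_storage (init_state :: ('q,'v::zero,'r) pstate)"
  unfolding wf_storage_def init_state_def by simp

lemma kv_extends: "co S \<subseteq>\<^sub>m co S' \<Longrightarrow> key S s \<noteq> None \<Longrightarrow> kv S' s = kv S s"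
  by (cases s) (auto simp: kv_def map_le_def dom_def)

lemma key_update_rt_prp [simp]:
  "key (S\<lparr>rt := x\<rparr>) s = key S s" "key (S\<lparr>prp := p\<rparr>) s = key S s"
  by (cases s; simp)+

lemma kv_update_rt_prp [simp]:
  "kv (S\<lparr>rt := x\<rparr>) s = kv S s" "kv (S\<lparr>prp := p\<rparr>) s = kv S s"
  by (simp_all add: kv_def)

lemma pstep_extends:
  assumes "pstep P S e S'" and "wf_storage S"
  shows "state_extends S S' \<and> wf_storage S'"
  using assms
proof (induction rule: pstep.induct)
  case (fetch t ins S)
  then show ?case unfolding state_extends_def wf_storage_def by auto
next
  case (load_mem t i S a)
  then show ?case unfolding state_extends_def wf_storage_def setL_def by auto
next
  case (early_read t i S a i')
  then show ?case unfolding state_extends_def wf_storage_def setL_def by auto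
next
  case (commit t S i)
  then show ?case unfolding state_extends_def wf_storage_def setC_def by auto
next
  case (commit_store t S i a k)
  let ?S' = "setProp ((setC S t i)\<lparr>co := (co S)((t, i) \<mapsto> k)\<rparr>) t a (St t i)"
  have "co S (t,i) = None"
    using commit_store unfolding wf_storage_def can_commit_def by blast
  then have co: "co S \<subseteq>\<^sub>m co ?S'" by (auto simp: map_le_def setProp_def setC_def)
  have key: "key ?S' s \<noteq> None" if "key S s \<noteq> None \<or> s = St t i" for s
    using that by (cases s) (auto simp: setProp_def setC_def)
  have "key ?S' (prp ?S' t' a') \<noteq> None" for t' a'
    using key commit_store.prems unfolding wf_storage_def by (auto simp: setProp_def setC_def)
  then show ?case
    using co commit_store.prems unfolding state_extends_def wf_storage_def
    by (auto simp: setProp_def setC_def)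
next
  case (propagate t t' i' S a k)
  have "key S (prp S t2 a2) \<noteq> None" for t2 a2
    using propagate.prems unfolding wf_storage_def by blast
  then have "key (setProp S t a (St t' i')) (prp (setProp S t a (St t' i')) t2 a2) \<noteq> None" for t2 a2
    using propagate.hyps by (auto simp: setProp_def)
  then show ?case
    using propagate.prems unfolding state_extends_def wf_storage_def by (auto simp: setProp_def)
qed

lemma reach_extends: "reach P S \<sigma> q \<Longrightarrow> wf_storage S \<Longrightarrow> state_extends S q \<and> wf_storage q"
  by (induction rule: reach.induct) (use state_extends_refl pstep_extends state_extends_trans in blast)+

lemma pstep_prp_key_mono:
  assumes "pstep P S e S'" and "wf_storage S"
  shows "kv S (prp S t a) \<le> kv S' (prp S' t a)"
  using assms
proof (induction rule: pstep.induct)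
  case (commit_store t0 S i a0 k)
  let ?S' = "setProp ((setC S t0 i)\<lparr>co := (co S)((t0, i) \<mapsto> k)\<rparr>) t0 a0 (St t0 i)"
  show ?case
  proof (cases "t = t0 \<and> a = a0")
    case False
    then have "prp ?S' t a = prp S t a" by (auto simp: setProp_def setC_def)
    moreover have "state_extends S ?S'"
      using pstep_extends[OF pstep.commit_store[OF commit_store.hyps] commit_store.prems] by blast
    moreover have "key S (prp S t a) \<noteq> None"
      using commit_store.prems unfolding wf_storage_def by blast
    ultimately show ?thesis
      using kv_extends unfolding state_extends_def by (metis order_refl)
  qed (use commit_store.hyps in \<open>simp add: kv_def setProp_def setC_def\<close>)
qed (auto simp: kv_def setL_def setC_def setProp_def)

lemma pstep_committed_store_key_gt_prp:
  assumes "pstep P S e S'" and "wf_storage S"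
    and "i \<notin> committed (rt S t)" and "i \<in> committed (rt S' t)"
    and "is_store (cmdAt S t i)" and "addrOf S t i = Some a"
  shows "kv S (prp S t a) < kv S' (St t i) \<and> key S' (St t i) \<noteq> None"
  using assms
proof (induction rule: pstep.induct)
  case (commit_store t0 S i0 a0 k)
  then have "t0 = t" "i0 = i" by (auto simp: setProp_def setC_def split: if_splits)
  then show ?case using commit_store by (auto simp: setProp_def setC_def kv_def)
qed (auto simp: setL_def setC_def setProp_def split: if_splits)

lemma reach_committed_store_key_gt_prp:
  "reach P R \<sigma> q \<Longrightarrow> wf_storage R \<Longrightarrow> i \<notin> committed (rt R t) \<Longrightarrow> i \<in> committed (rt q t)
    \<Longrightarrow> i < nf R t \<Longrightarrow> is_store (cmdAt R t i) \<Longrightarrow> addrOf R t i = Some a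
    \<Longrightarrow> kv R (prp R t a) < kv q (St t i)"
proof (induction rule: reach.induct)
  case (reach_step R e R' \<sigma> q)
  have ext: "state_extends R R'" and wf: "wf_storage R'"
    using pstep_extends[OF reach_step.hyps(1) reach_step.prems(1)] by auto
  show ?case
  proof (cases "i \<in> committed (rt R' t)")
    case True
    then have c: "kv R (prp R t a) < kv R' (St t i)" "key R' (St t i) \<noteq> None"
      using pstep_committed_store_key_gt_prp reach_step by blast+
    have "co R' \<subseteq>\<^sub>m co q"
      using reach_extends[OF reach_step.hyps(2) wf] by (simp add: state_extends_def)
    then show ?thesis using c kv_extends by metis
  next
    case False
    have "i < nf R' t" using state_extends_nf[OF ext] reach_step.prems(4) by (metis order.strict_trans2)
    moreover have "is_store (cmdAt R' t i)"
      using state_extends_cmdAt[OF ext reach_step.prems(4)] reach_step.prems(5) by simp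
    moreover have "addrOf R' t i = Some a"
      using addrOf_extends[OF reach_step.prems(6) ext reach_step.prems(4)] .
    ultimately have "kv R' (prp R' t a) < kv q (St t i)"
      using reach_step.IH[OF wf False reach_step.prems(3)] by blast
    then show ?thesis
      using pstep_prp_key_mono[OF reach_step.hyps(1) reach_step.prems(1), of t a] by simp
  qed
qed simp

subsection \<open>Determinism on final runs\<close>

lemma load_from_memory_past_pending_store_not_final:
  assumes t: "tid P t" and i: "i < nf S t" and ld: "is_load (cmdAt S t i)"
    and unsat: "lrd (rt S t) i = None" and ai: "addrOf S t i = Some a"
    and j: "j < i" and st: "is_store (cmdAt S t j)" and aj: "addrOf S t j = Some a"
    and pending: "j \<notin> committed (rt S t)"
    and wf: "wf_storage S" and run: "reach P (setL S t i (prp S t a)) \<sigma> q" and fin: "final P q"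
  shows False
proof -
  let ?S1 = "setL S t i (prp S t a)"
  have ext1: "state_extends S ?S1" and wf1: "wf_storage ?S1"
    using pstep_extends[OF pstep.load_mem[OF t i ld unsat ai] wf] by auto
  have extq: "state_extends ?S1 q" using reach_extends[OF run wf1] by blast
  have ext: "state_extends S q" using state_extends_trans[OF ext1 extq] .
  have jn: "j < nf S t" using j i by simp
  have iq: "i < nf q t" using state_extends_nf[OF ext, of t] i by simp
  have cmd: "cmdAt q t j = cmdAt S t j" "cmdAt q t i = cmdAt S t i"
    using state_extends_cmdAt[OF ext jn] state_extends_cmdAt[OF ext i] by auto
  have addr: "addrOf q t j = Some a" "addrOf q t i = Some a"
    using addrOf_extends[OF aj ext jn] addrOf_extends[OF ai ext i] by auto
  have "lrd (rt q t) i = Some (prp S t a)"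
    using state_extends_lrd[OF extq] by (simp add: setL_def)
  then have le: "kv q (St t j) \<le> kv q (prp S t a)"
    using fin t j iq cmd addr ld st unfolding final_def by fastforce
  have "j \<in> committed (rt q t)" using fin t j iq unfolding final_def by simp
  then have "kv ?S1 (prp ?S1 t a) < kv q (St t j)"
    using reach_committed_store_key_gt_prp[OF run wf1] pending state_extends_nf[OF ext1, of t] jn st aj
      state_extends_cmdAt[OF ext1 jn] addrOf_extends[OF aj ext1 jn]
    by (simp add: setL_def)
  moreover have "kv q (prp S t a) = kv S (prp S t a)"
    using wf kv_extends ext unfolding wf_storage_def state_extends_def by blast
  ultimately show False using le by (simp add: setL_def)
qed

lemma pstep_events_nonempty: "pstep P S e S' \<Longrightarrow> e \<noteq> []"
  by (induction rule: pstep.induct) auto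

lemma pstep_events_unique_split:
  "pstep P S e S1 \<Longrightarrow> pstep P R e' R' \<Longrightarrow> e @ \<sigma> = e' @ \<sigma>' \<Longrightarrow> e = e'"
  by (induction rule: pstep.induct; erule pstep.cases) auto

lemma Greatest_less_nat:
  fixes i :: nat
  assumes "\<exists>j<i. R j" shows "(GREATEST j. j < i \<and> R j) < i \<and> R (GREATEST j. j < i \<and> R j)"
proof -
  obtain j where "j < i \<and> R j" using assms by blast
  then show ?thesis by (rule GreatestI_nat[where b = i]) auto
qed

lemma pstep_final_deterministic:
  assumes s1: "pstep P S e S1" and s2: "pstep P S e S2" and wf: "wf_storage S"
    and r1: "reach P S1 \<sigma> q1" and f1: "final P q1" and r2: "reach P S2 \<sigma> q2" and f2: "final P q2"
  shows "S1 = S2"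
proof -
  have memory_vs_early_read: False
    if "tid P t" "i < nf S t" "is_load (cmdAt S t i)" "lrd (rt S t) i = None" "addrOf S t i = Some a"
      and "\<exists>j<i. is_store (cmdAt S t j) \<and> addrOf S t j \<in> {Some a, None}"
      and "j = (GREATEST j. j < i \<and> is_store (cmdAt S t j) \<and> addrOf S t j \<in> {Some a, None})"
      and "addrOf S t j = Some a" "j \<notin> committed (rt S t)"
      and "reach P (setL S t i (prp S t a)) \<sigma> q" "final P q" for t i a j q
    using that Greatest_less_nat[OF that(6)] wf
      load_from_memory_past_pending_store_not_final[of P t i S a j]
    by simp
  from s1 show ?thesis
  proof cases
    case load_mem
    from s2 show ?thesis
    proof cases
      case early_read
      then show ?thesis using load_mem memory_vs_early_read r1 f1 by blast
    qed (use load_mem in auto)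
  next
    case early_read
    from s2 show ?thesis
    proof cases
      case load_mem
      then show ?thesis using early_read memory_vs_early_read r2 f2 by blast
    qed (use early_read in auto)
  qed (use s2 in \<open>cases; auto\<close>)+
qed

lemma reach_final_deterministic:
  "reach P S \<sigma> q1 \<Longrightarrow> wf_storage S \<Longrightarrow> final P q1 \<Longrightarrow> reach P S \<sigma> q2 \<Longrightarrow> final P q2 \<Longrightarrow> q1 = q2"
proof (induction arbitrary: q2 rule: reach.induct)
  case (reach_refl S)
  from reach_refl.prems(3) show ?case
    by cases (auto dest: pstep_events_nonempty)
next
  case (reach_step S e S1 \<sigma> q1)
  from reach_step.prems(3) show ?case
  proof cases
    case (reach_step e' S2 \<sigma>')
    then have "e' = e" and "\<sigma>' = \<sigma>"
      using pstep_events_unique_split[OF \<open>pstep P S e S1\<close>] by (metis append_eq_append_conv)+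
    then have "S1 = S2"
      using pstep_final_deterministic reach_step.hyps reach_step.prems local.reach_step by blast
    then show ?thesis
      using reach_step.IH pstep_extends reach_step.hyps reach_step.prems local.reach_step \<open>\<sigma>' = \<sigma>\<close>
      by blast
  qed (use pstep_events_nonempty reach_step.hyps in blast)
qed

theorem lemma1:
  fixes P :: "('q, 'v::{finite,zero}, 'r::finite) program"
    and \<sigma> :: "('q, 'v, 'r) event list"
  assumes "\<forall>T\<in>set P. finite (ttrans T)"
    and "reach P init_state \<sigma> q" and "final P q"
    and "reach P init_state \<sigma> q'" and "final P q'"
  shows "q = q'"
  using reach_final_deterministic[OF assms(2) wf_storage_init assms(3-5)] .

end
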